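(* Let $\delta\in\{1,-1\}$. Let $\alpha,\beta,\gamma\in\mathbb{Z}[i]$ satisfy $\alpha^2+(1+\delta i)\beta^2+\gamma^2=0$, $\alpha\beta\gamma\neq0$, $\gcd(\alpha,\beta)\in U$. Then, after multiplying $\alpha,\beta,\gamma$ by suitable units and possibly interchanging the first and third coordinates, one obtains $(X,Y,Z)$ with $X^2+(1+\delta i)Y^2=Z^2$, $X,Z\in O^I$, $Y=(1+i)^{2+a_1}p_2^{a_2}\cdots p_m^{a_m}$ (integers $a_j\ge0$, $p_j$ distinct Gaussian primes in $O^I$), $\gcd(X,Y)\in U$, $XYZ\ne0$. Conversely, if $(X,Y,Z)$ satisfies $X^2+(1+\delta i)Y^2=Z^2$, $\gcd(X,Y)\in U$, $XYZ\neq 0$, then $(X,Y,iZ)$ is a solution of $X^2+(1+\delta i)Y^2+Z^2=0$ with the same conditions.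
   Context: $\mathbb{Z}[i]$ is the ring of Gaussian integers, $U=\{1,-1,i,-i\}$ its unit group; $R(\alpha),I(\alpha)$ are real and imaginary parts. $\gcd(x,y)\in U$ means no common non-unit divisor. $O=\{\alpha: R(\alpha)+I(\alpha)\equiv1\pmod 2\}$, $O^I=\{\alpha\in O: R(\alpha)\equiv 1\pmod 4\}$. *)

theory Defs
  imports Complex_Main
begin

definition gint :: "complex set" where
  "gint = {z. Re z \<in> \<int> \<and> Im z \<in> \<int>}"

definition gdvd :: "complex \<Rightarrow> complex \<Rightarrow> bool" where
  "gdvd a b \<longleftrightarrow> (\<exists>c\<in>gint. b = a * c)"

definition gunits :: "complex set" where
  "gunits = {1, -1, \<i>, -\<i>}"

text \<open>gcd(x,y) in U: no common non-unit divisor in Z[i].\<close>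
definition gcoprime :: "complex \<Rightarrow> complex \<Rightarrow> bool" where
  "gcoprime x y \<longleftrightarrow> (\<forall>d\<in>gint. gdvd d x \<and> gdvd d y \<longrightarrow> d \<in> gunits)"

definition gprime :: "complex \<Rightarrow> bool" where
  "gprime p \<longleftrightarrow> p \<in> gint \<and> p \<noteq> 0 \<and> p \<notin> gunits \<and>
     (\<forall>a\<in>gint. \<forall>b\<in>gint. gdvd p (a * b) \<longrightarrow> gdvd p a \<or> gdvd p b)"

definition gO :: "complex set" where
  "gO = {z \<in> gint. odd (\<lfloor>Re z\<rfloor> + \<lfloor>Im z\<rfloor>)}"

definition gOI :: "complex set" where
  "gOI = {z \<in> gO. \<lfloor>Re z\<rfloor> mod 4 = 1}"

end

theory Submission
  imports Defs
begin

text \<open>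
  Write \<open>\<alpha> = a + bi\<close>, \<open>\<beta> = c + di\<close>, \<open>\<gamma> = e + fi\<close>. Comparing real and imaginary parts of
  \<open>\<alpha>\<^sup>2 + (1 + \<delta>i)\<beta>\<^sup>2 + \<gamma>\<^sup>2 = 0\<close> modulo 2 and 4, and using that \<open>\<alpha>, \<beta>\<close> are not both divisible
  by \<open>1 + i\<close>, forces \<open>c, d\<close> even and makes one of \<open>\<alpha>, \<gamma>\<close> have odd real and even imaginary
  part and the other the reverse. Hence \<open>\<beta> = 2\<beta>'\<close>, and \<open>\<beta>\<close> is a unit times \<open>(1 + i)\<^sup>2\<^sup>+\<^sup>a w\<close>
  with \<open>w\<close> primary (in \<open>O\<^sup>I\<close>). Multiplying the equation by the square of the inverse unit and
  choosing signs puts the coordinate with odd real part into \<open>O\<^sup>I\<close> as \<open>X\<close> and \<open>i\<close> times the other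
  one into \<open>O\<^sup>I\<close> as \<open>Z\<close>. Finally \<open>w\<close> is a product of primary primes: every Gaussian prime
  not dividing \<open>1 + i\<close> has exactly one associate in \<open>O\<^sup>I\<close>, and \<open>O\<^sup>I\<close> is closed under products.
  The converse is just \<open>(iZ)\<^sup>2 = -Z\<^sup>2\<close>.
\<close>

section \<open>Gaussian integers, units, norm and divisibility\<close>

lemma gint_Complex [simp]: "Complex (of_int a) (of_int b) \<in> gint"
  by (simp add: gint_def)

lemma gint_cases:
  assumes "z \<in> gint"
  obtains a b :: int where "z = Complex (of_int a) (of_int b)"
proof -
  from assms obtain a b where "Re z = of_int a" "Im z = of_int b"
    unfolding gint_def by (auto elim!: Ints_cases)
  then show ?thesis using that by (metis complex_surj)
qed

lemma gint_add [simp, intro]: "x \<in> gint \<Longrightarrow> y \<in> gint \<Longrightarrow> x + y \<in> gint"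
  and gint_diff [simp, intro]: "x \<in> gint \<Longrightarrow> y \<in> gint \<Longrightarrow> x - y \<in> gint"
  and gint_minus [simp, intro]: "x \<in> gint \<Longrightarrow> - x \<in> gint"
  and gint_mult [simp, intro]: "x \<in> gint \<Longrightarrow> y \<in> gint \<Longrightarrow> x * y \<in> gint"
  by (simp_all add: gint_def)

lemma gint_0 [simp]: "0 \<in> gint"
  and gint_1 [simp]: "1 \<in> gint"
  and gint_i [simp]: "\<i> \<in> gint"
  and gint_of_int [simp]: "of_int n \<in> gint"
  by (simp_all add: gint_def)

lemma gint_power [simp, intro]: "x \<in> gint \<Longrightarrow> x ^ n \<in> gint"
  by (induction n) auto

lemma gunits_gint: "u \<in> gunits \<Longrightarrow> u \<in> gint"
  and gunits_nonzero: "u \<in> gunits \<Longrightarrow> u \<noteq> 0"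
  by (auto simp: gunits_def)

lemma gunits_inverse:
  assumes "u \<in> gunits"
  obtains v where "v \<in> gunits" "u * v = 1"
proof -
  have "u = 1 \<or> u = -1 \<or> u = \<i> \<or> u = -\<i>"
    using assms by (simp add: gunits_def)
  then show ?thesis
    using that[of 1] that[of "-1"] that[of "-\<i>"] that[of "\<i>"] by (auto simp: gunits_def)
qed

definition gnorm :: "complex \<Rightarrow> nat" where
  "gnorm z = nat (\<lfloor>Re z\<rfloor>\<^sup>2 + \<lfloor>Im z\<rfloor>\<^sup>2)"

lemma gnorm_Complex [simp]: "gnorm (Complex (of_int a) (of_int b)) = nat (a\<^sup>2 + b\<^sup>2)"
  by (simp add: gnorm_def)

lemma of_nat_gnorm:
  assumes "z \<in> gint"
  shows "real (gnorm z) = (cmod z)\<^sup>2"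
proof -
  obtain a b where z: "z = Complex (of_int a) (of_int b)"
    using assms by (rule gint_cases)
  have "(0::int) \<le> a\<^sup>2 + b\<^sup>2" by simp
  then show ?thesis
    unfolding z cmod_power2 by (simp del: of_int_power add: of_int_power[symmetric])
qed

lemma gnorm_mult:
  assumes "x \<in> gint" "y \<in> gint"
  shows "gnorm (x * y) = gnorm x * gnorm y"
proof -
  have "real (gnorm (x * y)) = real (gnorm x * gnorm y)"
    using assms by (simp add: of_nat_gnorm norm_mult power_mult_distrib)
  then show ?thesis
    by (simp only: of_nat_eq_iff)
qed

lemma gnorm_eq_0_iff:
  assumes "z \<in> gint"
  shows "gnorm z = 0 \<longleftrightarrow> z = 0"
proof -
  have "real (gnorm z) = 0 \<longleftrightarrow> z = 0"
    using assms by (simp add: of_nat_gnorm)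
  then show ?thesis
    by simp
qed

lemma gnorm_eq_1_iff:
  assumes "z \<in> gint"
  shows "gnorm z = 1 \<longleftrightarrow> z \<in> gunits"
proof -
  obtain a b where z: "z = Complex (of_int a) (of_int b)"
    using assms by (rule gint_cases)
  have "a\<^sup>2 + b\<^sup>2 = 1 \<longleftrightarrow> (a, b) \<in> {(1, 0), (-1, 0), (0, 1), (0, -1)}"
  proof
    assume sum: "a\<^sup>2 + b\<^sup>2 = 1"
    then have "a\<^sup>2 \<le> 1" "b\<^sup>2 \<le> 1"
      by (smt (verit) zero_le_power2)+
    then have "\<bar>a\<bar> \<le> 1" "\<bar>b\<bar> \<le> 1"
      by (simp_all add: abs_square_le_1)
    then have "a \<in> {-1, 0, 1}" "b \<in> {-1, 0, 1}" by auto
    then show "(a, b) \<in> {(1, 0), (-1, 0), (0, 1), (0, -1)}" using sum by auto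
  qed auto
  moreover have "z \<in> gunits \<longleftrightarrow> (a, b) \<in> {(1, 0), (-1, 0), (0, 1), (0, -1)}"
    unfolding z gunits_def by (auto simp: complex_eq_iff)
  ultimately show ?thesis
    using z by (simp add: nat_eq_iff)
qed

lemma gnorm_gunits: "u \<in> gunits \<Longrightarrow> gnorm u = 1"
  using gnorm_eq_1_iff gunits_gint by blast

lemma gnorm_one_plus_i: "gnorm (1 + \<i>) = 2"
  by (simp add: gnorm_def)

lemma one_plus_i_nonzero: "1 + \<i> \<noteq> 0"
  by (simp add: complex_eq_iff)

lemma one_plus_i_not_gunit: "1 + \<i> \<notin> gunits"
  using gnorm_gunits gnorm_one_plus_i by fastforce

lemma gnorm_less_mult:
  assumes "p \<in> gint" "c \<in> gint" "p \<noteq> 0" "p \<notin> gunits" "c \<noteq> 0"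
  shows "gnorm c < gnorm (p * c)"
proof -
  have "gnorm p \<noteq> 0" "gnorm p \<noteq> 1" "gnorm c \<noteq> 0"
    using assms gnorm_eq_0_iff gnorm_eq_1_iff by auto
  then have "gnorm p > 1" "gnorm c > 0"
    by auto
  then have "gnorm c * 1 < gnorm c * gnorm p"
    by (intro mult_strict_left_mono)
  then show ?thesis
    using gnorm_mult[OF assms(1,2)] by (simp add: mult.commute)
qed

lemma gdvd_refl [simp]: "gdvd a a"
  unfolding gdvd_def by (auto intro: bexI[of _ 1])

lemma gdvd_trans: "gdvd a b \<Longrightarrow> gdvd b c \<Longrightarrow> gdvd a c"
  unfolding gdvd_def by (metis gint_mult mult.assoc)

lemma gdvd_mult2: "gdvd a b \<Longrightarrow> c \<in> gint \<Longrightarrow> gdvd a (b * c)"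
  unfolding gdvd_def by (metis gint_mult mult.assoc)

lemma gdvd_mult: "gdvd a b \<Longrightarrow> c \<in> gint \<Longrightarrow> gdvd a (c * b)"
  by (metis gdvd_mult2 mult.commute)

lemma gdvd_triv_left: "c \<in> gint \<Longrightarrow> gdvd a (a * c)"
  unfolding gdvd_def by blast

lemma gdvd_add: "gdvd a b \<Longrightarrow> gdvd a c \<Longrightarrow> gdvd a (b + c)"
  unfolding gdvd_def by (metis distrib_left gint_add)

lemma gdvd_diff: "gdvd a b \<Longrightarrow> gdvd a c \<Longrightarrow> gdvd a (b - c)"
  unfolding gdvd_def by (metis right_diff_distrib gint_diff)

lemma gdvd_unit_mult_cancel:
  assumes "u \<in> gunits" "gdvd a (u * b)"
  shows "gdvd a b"
proof -
  obtain v where "v \<in> gunits" "u * v = 1"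
    using assms(1) by (rule gunits_inverse)
  then show ?thesis
    using gdvd_mult2[OF assms(2), of v] gunits_gint by (simp add: algebra_simps)
qed

lemma gdvd_unit_mult_left:
  assumes "u \<in> gunits" "gdvd a b"
  shows "gdvd (u * a) b"
proof -
  obtain v where v: "v \<in> gunits" "u * v = 1"
    using assms(1) by (rule gunits_inverse)
  obtain c where c: "c \<in> gint" "b = a * c"
    using assms(2) gdvd_def by blast
  have "b = (u * a) * (v * c)"
    using c v(2) by (simp add: algebra_simps)
  then show ?thesis
    unfolding gdvd_def using c(1) v(1) gunits_gint by blast
qed

lemma gcoprime_mult_units:
  assumes "gcoprime x y" "u \<in> gunits" "v \<in> gunits"
  shows "gcoprime (u * x) (v * y)"
  unfolding gcoprime_def
proof (intro ballI impI)
  fix d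
  assume "d \<in> gint" "gdvd d (u * x) \<and> gdvd d (v * y)"
  then have "gdvd d x" "gdvd d y"
    using gdvd_unit_mult_cancel assms(2,3) by blast+
  then show "d \<in> gunits"
    using assms(1) \<open>d \<in> gint\<close> unfolding gcoprime_def by blast
qed

section \<open>Gaussian primes\<close>

lemma gint_division:
  assumes "a \<in> gint" "b \<in> gint" "b \<noteq> 0"
  obtains q where "q \<in> gint" "gnorm (a - q * b) < gnorm b"
proof -
  define z where "z = a / b"
  define q where "q = Complex (of_int (round (Re z))) (of_int (round (Im z)))"
  have round_sq: "(x - of_int (round x))\<^sup>2 \<le> 1 / 4" for x :: real
  proof -
    have "\<bar>x - of_int (round x)\<bar> \<le> 1 / 2"
      using of_int_round_ge[of x] of_int_round_le[of x] by linarith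
    then have "\<bar>x - of_int (round x)\<bar> * \<bar>x - of_int (round x)\<bar> \<le> 1 / 2 * (1 / 2)"
      by (intro mult_mono) auto
    then show ?thesis by (simp add: power2_eq_square)
  qed
  have "q \<in> gint"
    by (simp add: q_def)
  have close: "(cmod (z - q))\<^sup>2 \<le> 1 / 2"
    unfolding cmod_power2 q_def using round_sq[of "Re z"] round_sq[of "Im z"] by simp
  moreover have "real (gnorm (a - q * b)) = (cmod (z - q))\<^sup>2 * (cmod b)\<^sup>2"
  proof -
    have "a - q * b = (z - q) * b"
      using assms(3) by (simp add: z_def algebra_simps)
    moreover have "real (gnorm (a - q * b)) = (cmod (a - q * b))\<^sup>2"
      using assms \<open>q \<in> gint\<close> by (simp add: of_nat_gnorm)
    ultimately show ?thesis
      by (simp add: norm_mult power_mult_distrib)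
  qed
  ultimately have "real (gnorm (a - q * b)) \<le> 1 / 2 * (cmod b)\<^sup>2"
    using mult_right_mono[OF close, of "(cmod b)\<^sup>2"] by simp
  also have "\<dots> < real (gnorm b)"
    using assms by (simp add: of_nat_gnorm)
  finally show ?thesis
    using that \<open>q \<in> gint\<close> by simp
qed

text \<open>The least-norm nonzero combination divides every combination, by division with remainder.\<close>

lemma gint_bezout:
  assumes "a \<in> gint" "p \<in> gint" "p \<noteq> 0"
  obtains g s t where "s \<in> gint" "t \<in> gint" "g = s * a + t * p" "gdvd g a" "gdvd g p"
proof -
  define S where "S x \<longleftrightarrow> x \<noteq> 0 \<and> (\<exists>s\<in>gint. \<exists>t\<in>gint. x = s * a + t * p)" for x
  have "p = 0 * a + 1 * p"
    by simp
  then have "S p"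
    unfolding S_def using assms(3) gint_0 gint_1 by blast
  then obtain g where g: "S g" and least: "\<And>y. S y \<Longrightarrow> gnorm g \<le> gnorm y"
    using ex_has_least_nat[of S p gnorm] by blast
  obtain s t where st: "s \<in> gint" "t \<in> gint" "g = s * a + t * p" "g \<noteq> 0"
    using g unfolding S_def by blast
  have g_gint: "g \<in> gint"
    using st assms by auto
  have combination: "gdvd g (s' * a + t' * p)" if "s' \<in> gint" "t' \<in> gint" for s' t'
  proof -
    have "s' * a + t' * p \<in> gint"
      using that assms by auto
    then obtain q where q: "q \<in> gint" "gnorm (s' * a + t' * p - q * g) < gnorm g"
      by (rule gint_division[OF _ g_gint st(4)])
    have "S (s' * a + t' * p - q * g) \<or> s' * a + t' * p - q * g = 0"
    proof -
      have "s' * a + t' * p - q * g = (s' - q * s) * a + (t' - q * t) * p"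
        using st(3) by (simp add: algebra_simps)
      moreover have "s' - q * s \<in> gint" "t' - q * t \<in> gint"
        using q(1) st(1,2) that by auto
      ultimately show ?thesis
        unfolding S_def by blast
    qed
    then have "s' * a + t' * p = g * q"
      using least q(2) by (force simp: algebra_simps)
    then show ?thesis
      unfolding gdvd_def using q(1) by auto
  qed
  show ?thesis
    using that[OF st(1-3)] combination[of 1 0] combination[of 0 1] by simp
qed

lemma gprime_if_irreducible:
  assumes p: "p \<in> gint" "p \<noteq> 0" "p \<notin> gunits"
    and irreducible: "\<And>d. d \<in> gint \<Longrightarrow> gdvd d p \<Longrightarrow> d \<in> gunits \<or> gdvd p d"
  shows "gprime p"
  unfolding gprime_def
proof (intro conjI ballI impI p)
  fix a b
  assume ab: "a \<in> gint" "b \<in> gint" "gdvd p (a * b)"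
  have "gdvd p b" if "\<not> gdvd p a"
  proof -
    obtain g s t where st: "s \<in> gint" "t \<in> gint" "g = s * a + t * p" "gdvd g a" "gdvd g p"
      using gint_bezout[OF ab(1) p(1,2)] by blast
    have "g \<in> gunits"
      using irreducible[OF _ st(5)] st that ab(1) p(1) gdvd_trans by blast
    moreover have "gdvd p (g * b)"
    proof -
      have "g * b = s * (a * b) + p * (t * b)"
        using st(3) by (simp add: algebra_simps)
      then show ?thesis
        using gdvd_add[OF gdvd_mult[OF ab(3) st(1)] gdvd_triv_left[of "t * b" p]] st(2) ab(2)
        by simp
    qed
    ultimately show "gdvd p b"
      by (rule gdvd_unit_mult_cancel)
  qed
  then show "gdvd p a \<or> gdvd p b"
    by blast
qed

lemma gprime_gint: "gprime p \<Longrightarrow> p \<in> gint"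
  by (simp add: gprime_def)

lemma gprime_divisor_exists:
  assumes "z \<in> gint" "z \<noteq> 0" "z \<notin> gunits"
  obtains p where "gprime p" "gdvd p z"
proof -
  define T where "T d \<longleftrightarrow> d \<in> gint \<and> d \<notin> gunits \<and> gdvd d z" for d
  have "T z"
    using assms by (simp add: T_def)
  then obtain d where d: "T d" and least: "\<And>y. T y \<Longrightarrow> gnorm d \<le> gnorm y"
    using ex_has_least_nat[of T z gnorm] by blast
  have d_gint: "d \<in> gint" and d_nonunit: "d \<notin> gunits" and "gdvd d z"
    using d T_def by auto
  have "d \<noteq> 0"
    using \<open>gdvd d z\<close> assms(2) unfolding gdvd_def by auto
  have "gprime d"
  proof (rule gprime_if_irreducible[OF d_gint \<open>d \<noteq> 0\<close> d_nonunit])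
    fix e
    assume e: "e \<in> gint" "gdvd e d"
    have "gdvd d e" if "e \<notin> gunits"
    proof -
      from that have "gnorm d \<le> gnorm e"
        using least e \<open>gdvd d z\<close> gdvd_trans unfolding T_def by blast
      obtain c where c: "c \<in> gint" "d = e * c"
        using e(2) gdvd_def by blast
      have "c \<in> gunits"
        using gnorm_less_mult[of c e] c \<open>d \<noteq> 0\<close> e(1) \<open>gnorm d \<le> gnorm e\<close>
        by (auto simp: mult.commute)
      then obtain v where "v \<in> gunits" "c * v = 1"
        by (rule gunits_inverse)
      then have "e = d * v"
        using c(2) by (simp add: mult.assoc)
      then show "gdvd d e"
        unfolding gdvd_def using \<open>v \<in> gunits\<close> gunits_gint by blast
    qed
    then show "e \<in> gunits \<or> gdvd d e"
      by blast
  qed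
  then show ?thesis
    using that \<open>gdvd d z\<close> by blast
qed

lemma gprime_unit_mult:
  assumes "gprime p" "u \<in> gunits"
  shows "gprime (u * p)"
proof -
  have p: "p \<in> gint" "p \<noteq> 0" "p \<notin> gunits"
    using assms(1) gprime_def by auto
  have "gnorm (u * p) = gnorm p"
    using gnorm_mult[OF gunits_gint[OF assms(2)] p(1)] gnorm_gunits[OF assms(2)] by simp
  then have "u * p \<notin> gunits"
    using p gnorm_eq_1_iff gunits_gint[OF assms(2)] by (metis gint_mult)
  moreover have "gdvd (u * p) a \<or> gdvd (u * p) b"
    if "a \<in> gint" "b \<in> gint" "gdvd (u * p) (a * b)" for a b
  proof -
    have "gdvd p (u * p)"
      using gdvd_triv_left[of u p] gunits_gint[OF assms(2)] by (simp add: mult.commute)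
    then have "gdvd p (a * b)"
      using gdvd_trans that(3) by blast
    then show ?thesis
      using assms that gdvd_unit_mult_left unfolding gprime_def by blast
  qed
  ultimately show ?thesis
    unfolding gprime_def using p assms(2) gunits_gint gunits_nonzero by auto
qed

section \<open>Primary elements\<close>

definition gO_re :: "complex set" where
  "gO_re = {z \<in> gint. odd \<lfloor>Re z\<rfloor> \<and> even \<lfloor>Im z\<rfloor>}"

definition gO_im :: "complex set" where
  "gO_im = {z \<in> gint. even \<lfloor>Re z\<rfloor> \<and> odd \<lfloor>Im z\<rfloor>}"

lemma gO_Complex [simp]: "Complex (of_int a) (of_int b) \<in> gO \<longleftrightarrow> odd (a + b)"
  and gOI_Complex [simp]: "Complex (of_int a) (of_int b) \<in> gOI \<longleftrightarrow> a mod 4 = 1 \<and> even b"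
  and gO_re_Complex [simp]: "Complex (of_int a) (of_int b) \<in> gO_re \<longleftrightarrow> odd a \<and> even b"
  and gO_im_Complex [simp]: "Complex (of_int a) (of_int b) \<in> gO_im \<longleftrightarrow> even a \<and> odd b"
  by (simp_all add: gO_def gOI_def gO_re_def gO_im_def) presburger

lemma gOI_gint: "z \<in> gOI \<Longrightarrow> z \<in> gint"
  by (simp add: gOI_def gO_def)

lemma gO_re_gint: "z \<in> gO_re \<Longrightarrow> z \<in> gint"
  and gO_im_gint: "z \<in> gO_im \<Longrightarrow> z \<in> gint"
  by (simp_all add: gO_re_def gO_im_def)

lemma gOI_nonzero: "z \<in> gOI \<Longrightarrow> z \<noteq> 0"
  by (auto simp: gOI_def gO_def)

lemma one_in_gOI: "1 \<in> gOI"
  by (simp add: gOI_def gO_def gint_def)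

lemma gOI_gO_re:
  assumes "z \<in> gOI"
  shows "z \<in> gO_re"
proof -
  obtain a b where "z = Complex (of_int a) (of_int b)"
    using gOI_gint[OF assms] by (rule gint_cases)
  then show ?thesis
    using assms by simp presburger
qed

lemma i_mult_gO_im_iff: "\<i> * z \<in> gO_im \<longleftrightarrow> z \<in> gO_re"
  and i_mult_gO_re_iff: "\<i> * z \<in> gO_re \<longleftrightarrow> z \<in> gO_im"
  and minus_gO_re_iff: "- z \<in> gO_re \<longleftrightarrow> z \<in> gO_re"
  and minus_gO_im_iff: "- z \<in> gO_im \<longleftrightarrow> z \<in> gO_im"
  if "z \<in> gint"
proof -
  obtain a b where z: "z = Complex (of_int a) (of_int b)"
    using \<open>z \<in> gint\<close> by (rule gint_cases)
  have "\<i> * z = Complex (of_int (- b)) (of_int a)" "- z = Complex (of_int (- a)) (of_int (- b))"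
    using z by (simp_all add: complex_eq_iff)
  then show "\<i> * z \<in> gO_im \<longleftrightarrow> z \<in> gO_re" "\<i> * z \<in> gO_re \<longleftrightarrow> z \<in> gO_im"
    "- z \<in> gO_re \<longleftrightarrow> z \<in> gO_re" "- z \<in> gO_im \<longleftrightarrow> z \<in> gO_im"
    unfolding z by (simp_all only: gO_re_Complex gO_im_Complex) (simp_all add: conj_commute)
qed

lemma gO_cases: "z \<in> gO \<Longrightarrow> z \<in> gO_re \<or> z \<in> gO_im"
  by (auto elim!: gint_cases simp: gO_def)

lemma gO_re_disjoint_gO_im: "z \<in> gO_re \<Longrightarrow> z \<notin> gO_im"
  by (auto simp: gO_re_def gO_im_def)

lemma gO_re_sign_gOI:
  assumes "z \<in> gO_re"
  obtains s where "s \<in> {1, -1}" "s * z \<in> gOI"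
proof -
  obtain a b where z: "z = Complex (of_int a) (of_int b)"
    using gO_re_gint[OF assms] by (rule gint_cases)
  have "odd a" "even b"
    using assms z by auto
  show ?thesis
  proof (cases "a mod 4 = 1")
    case True
    then show ?thesis
      using that[of 1] z \<open>even b\<close> by simp
  next
    case False
    then have "(- a) mod 4 = 1"
      using \<open>odd a\<close> by presburger
    moreover have "-1 * z = Complex (of_int (- a)) (of_int (- b))"
      using z by (simp add: complex_eq_iff)
    ultimately show ?thesis
      using that[of "-1"] \<open>even b\<close> by (simp only: gOI_Complex) simp
  qed
qed

lemma gdvd_one_plus_i_Complex:
  "gdvd (1 + \<i>) (Complex (of_int a) (of_int b)) \<longleftrightarrow> even (a + b)"
proof
  assume "gdvd (1 + \<i>) (Complex (of_int a) (of_int b))"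
  then obtain c where c: "c \<in> gint" "Complex (of_int a) (of_int b) = (1 + \<i>) * c"
    unfolding gdvd_def by blast
  obtain x y where "c = Complex (of_int x) (of_int y)"
    using c(1) by (rule gint_cases)
  then have "a = x - y" "b = x + y"
    using c(2) by (simp_all add: complex_eq_iff)
  then show "even (a + b)" by simp
next
  assume "even (a + b)"
  then obtain k where k: "a + b = 2 * k" by blast
  have "Complex (of_int a) (of_int b) = (1 + \<i>) * Complex (of_int k) (of_int (k - a))"
    using k by (simp add: complex_eq_iff)
  then show "gdvd (1 + \<i>) (Complex (of_int a) (of_int b))"
    unfolding gdvd_def using gint_Complex by blast
qed

lemma gO_iff_not_gdvd_one_plus_i: "z \<in> gint \<Longrightarrow> z \<in> gO \<longleftrightarrow> \<not> gdvd (1 + \<i>) z"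
  by (elim gint_cases) (simp add: gdvd_one_plus_i_Complex)

lemma gO_associate_gOI:
  assumes "z \<in> gO"
  obtains u where "u \<in> gunits" "u * z \<in> gOI"
proof (cases "z \<in> gO_re")
  case True
  then show ?thesis
    using that by (auto simp: gunits_def elim!: gO_re_sign_gOI)
next
  case False
  then have "\<i> * z \<in> gO_re"
    using gO_cases[OF assms] i_mult_gO_re_iff assms by (auto simp: gO_def)
  then obtain s where "s \<in> {1, -1}" "s * (\<i> * z) \<in> gOI"
    by (rule gO_re_sign_gOI)
  then show ?thesis
    using that[of "s * \<i>"] by (auto simp: gunits_def mult.assoc)
qed

lemma gOI_unit_mult_eq_1:
  assumes "z \<in> gOI" "u \<in> gunits" "u * z \<in> gOI"
  shows "u = 1"
proof -
  obtain a b where z: "z = Complex (of_int a) (of_int b)"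
    using gOI_gint[OF assms(1)] by (rule gint_cases)
  have "- z \<notin> gOI"
  proof -
    have "a mod 4 = 1"
      using assms(1) z by simp
    then have "(- a) mod 4 \<noteq> 1" by presburger
    moreover have "- z = Complex (of_int (- a)) (of_int (- b))"
      using z by (simp add: complex_eq_iff)
    ultimately show ?thesis
      by (simp only: gOI_Complex) simp
  qed
  moreover have "\<i> * z \<in> gO_im" "- (\<i> * z) \<in> gO_im"
    using gOI_gO_re[OF assms(1)] gOI_gint[OF assms(1)] i_mult_gO_im_iff minus_gO_im_iff by auto
  then have "\<i> * z \<notin> gOI" "- \<i> * z \<notin> gOI"
    using gOI_gO_re gO_re_disjoint_gO_im by auto
  ultimately show ?thesis
    using assms(2,3) by (auto simp: gunits_def)
qed

lemma gOI_mult: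
  assumes "z \<in> gOI" "w \<in> gOI"
  shows "z * w \<in> gOI"
proof -
  obtain a b where z: "z = Complex (of_int a) (of_int b)"
    using gOI_gint[OF assms(1)] by (rule gint_cases)
  obtain c d where w: "w = Complex (of_int c) (of_int d)"
    using gOI_gint[OF assms(2)] by (rule gint_cases)
  have "a mod 4 = 1" "c mod 4 = 1" "even b" "even d"
    using assms z w by auto
  then obtain k m n l where "a = 4 * k + 1" "c = 4 * m + 1" "b = 2 * n" "d = 2 * l"
    by (metis evenE mod_div_mult_eq add.commute mult.commute)
  then have "a * c - b * d = 4 * (4 * k * m + k + m - n * l) + 1" "a * d + b * c = 2 * (a * l + n * c)"
    by (simp_all add: algebra_simps)
  then have "(a * c - b * d) mod 4 = 1" "even (a * d + b * c)"
    by presburger+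
  moreover have "z * w = Complex (of_int (a * c - b * d)) (of_int (a * d + b * c))"
    using z w by (simp add: complex_eq_iff)
  ultimately show ?thesis
    by (simp only: gOI_Complex)
qed

lemma gOI_cofactor:
  assumes "p \<in> gOI" "c \<in> gint" "p * c \<in> gOI"
  shows "c \<in> gOI"
proof -
  have "\<not> gdvd (1 + \<i>) (p * c)"
    using assms(3) gO_iff_not_gdvd_one_plus_i gOI_gint unfolding gOI_def by blast
  then have "c \<in> gO"
    using gO_iff_not_gdvd_one_plus_i[OF assms(2)] gdvd_mult gOI_gint[OF assms(1)] by blast
  then obtain u where u: "u \<in> gunits" "u * c \<in> gOI"
    by (rule gO_associate_gOI)
  have "u * (p * c) \<in> gOI"
    using gOI_mult[OF assms(1) u(2)] by (simp add: algebra_simps)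
  then have "u = 1"
    using gOI_unit_mult_eq_1[OF assms(3) u(1)] by simp
  then show ?thesis
    using u(2) by simp
qed

lemma prod_power_insert_mult:
  fixes q :: "'a :: comm_monoid_mult"
  assumes "finite P"
  obtains e' where "q * (\<Prod>p\<in>P. p ^ e p) = (\<Prod>p\<in>insert q P. p ^ e' p)"
proof -
  define e' where "e' = e(q := Suc (if q \<in> P then e q else 0))"
  have rest: "(\<Prod>p\<in>P - {q}. p ^ e' p) = (\<Prod>p\<in>P - {q}. p ^ e p)"
    by (rule prod.cong) (auto simp: e'_def)
  have "(\<Prod>p\<in>insert q P. p ^ e' p) = q ^ e' q * (\<Prod>p\<in>P - {q}. p ^ e' p)"
    by (rule prod.insert_remove[OF assms])
  also have "\<dots> = q ^ e' q * (\<Prod>p\<in>P - {q}. p ^ e p)"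
    by (simp only: rest)
  also have "\<dots> = q * (\<Prod>p\<in>P. p ^ e p)"
    using prod.remove[OF assms, of q "\<lambda>p. p ^ e p"] by (auto simp: e'_def mult.assoc)
  finally show ?thesis
    using that[of e'] by simp
qed

lemma gOI_prime_factorization:
  assumes "w \<in> gOI"
  obtains P e where "finite P" "P \<subseteq> {p. gprime p \<and> p \<in> gOI}" "w = (\<Prod>p\<in>P. p ^ e p)"
  using assms
proof (induction "gnorm w" arbitrary: w thesis rule: less_induct)
  case less
  have w: "w \<in> gint" "w \<noteq> 0"
    using less.prems gOI_gint gOI_nonzero by auto
  show ?case
  proof (cases "w \<in> gunits")
    case True
    then have "w = 1"
      using gOI_unit_mult_eq_1[OF one_in_gOI] less.prems(2) by simp
    then show ?thesis
      using less.prems(1)[of "{}"] by simp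
  next
    case False
    obtain p where p: "gprime p" "gdvd p w"
      using gprime_divisor_exists[OF w False] .
    have "p \<in> gO"
      using p gdvd_trans gO_iff_not_gdvd_one_plus_i less.prems(2) gprime_gint w(1)
      unfolding gOI_def by blast
    then obtain u where u: "u \<in> gunits" "u * p \<in> gOI"
      by (rule gO_associate_gOI)
    define p' where "p' = u * p"
    have p': "gprime p'" "p' \<in> gOI" "gdvd p' w"
      using gprime_unit_mult[OF p(1) u(1)] u(2) gdvd_unit_mult_left[OF u(1) p(2)]
      by (simp_all add: p'_def)
    obtain c where c: "c \<in> gint" "w = p' * c"
      using p'(3) gdvd_def by blast
    have "c \<in> gOI"
      using gOI_cofactor[OF p'(2) c(1)] c(2) less.prems(2) by simp
    moreover have "gnorm c < gnorm w"
      using gnorm_less_mult[of p' c] p'(1) c w(2) unfolding gprime_def by auto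
    ultimately obtain P e where P: "finite P" "P \<subseteq> {p. gprime p \<and> p \<in> gOI}"
      "c = (\<Prod>p\<in>P. p ^ e p)"
      using less.hyps by blast
    obtain e' where "p' * c = (\<Prod>p\<in>insert p' P. p ^ e' p)"
      using prod_power_insert_mult[OF P(1)] P(3) by metis
    then show ?thesis
      using less.prems(1)[of "insert p' P"] P p' c(2) by auto
  qed
qed

lemma gint_split_one_plus_i:
  assumes "z \<in> gint" "z \<noteq> 0"
  obtains u k w where "u \<in> gunits" "w \<in> gOI" "z = u * (1 + \<i>) ^ k * w"
  using assms
proof (induction "gnorm z" arbitrary: z thesis rule: less_induct)
  case less
  show ?case
  proof (cases "z \<in> gO")
    case True
    then obtain u where u: "u \<in> gunits" "u * z \<in> gOI"
      by (rule gO_associate_gOI)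
    obtain v where v: "v \<in> gunits" "u * v = 1"
      using u(1) by (rule gunits_inverse)
    have "z = v * (1 + \<i>) ^ 0 * (u * z)"
      using v(2) by (simp add: algebra_simps)
    then show ?thesis
      using less.prems(1) u v by blast
  next
    case False
    then obtain c where c: "c \<in> gint" "z = (1 + \<i>) * c"
      using gO_iff_not_gdvd_one_plus_i[OF less.prems(2)] gdvd_def by blast
    have "c \<noteq> 0"
      using c less.prems(3) by auto
    moreover have "gnorm c < gnorm z"
      using gnorm_less_mult[of "1 + \<i>" c] c \<open>c \<noteq> 0\<close> one_plus_i_nonzero one_plus_i_not_gunit
      by auto
    ultimately obtain u k w where "u \<in> gunits" "w \<in> gOI" "c = u * (1 + \<i>) ^ k * w"
      using less.hyps c(1) by blast
    then show ?thesis
      using less.prems(1)[of u w "Suc k"] c(2) by (simp add: algebra_simps)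
  qed
qed

lemma even_gint_normal_form:
  assumes "\<beta> \<in> gint" "\<beta> \<noteq> 0" "gdvd 2 \<beta>"
  obtains v a w where "v \<in> gunits" "w \<in> gOI" "v * \<beta> = (1 + \<i>) ^ (2 + a) * w"
proof -
  obtain \<beta>' where \<beta>': "\<beta>' \<in> gint" "\<beta> = 2 * \<beta>'"
    using assms(3) gdvd_def by blast
  have "\<beta>' \<noteq> 0"
    using \<beta>'(2) assms(2) by auto
  then obtain u a w where u: "u \<in> gunits" "w \<in> gOI" "\<beta>' = u * (1 + \<i>) ^ a * w"
    by (rule gint_split_one_plus_i[OF \<beta>'(1)])
  have "(1 + \<i>)\<^sup>2 = 2 * \<i>"
    by (simp add: power2_eq_square algebra_simps)
  then have \<beta>: "\<beta> = (- \<i> * u) * ((1 + \<i>) ^ (2 + a) * w)"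
    unfolding \<beta>' u(3) power_add by (simp add: algebra_simps)
  have "- \<i> * u \<in> gunits"
    using u(1) by (auto simp: gunits_def)
  then obtain v where v: "v \<in> gunits" "(- \<i> * u) * v = 1"
    by (rule gunits_inverse)
  have "v * \<beta> = ((- \<i> * u) * v) * ((1 + \<i>) ^ (2 + a) * w)"
    using \<beta> by (simp add: algebra_simps)
  also have "\<dots> = (1 + \<i>) ^ (2 + a) * w"
    by (simp only: v(2) mult_1_left)
  finally show ?thesis
    using that v(1) u(2) by blast
qed

section \<open>Solutions of the equation\<close>

lemma power2_mod_4_int: "(x::int)\<^sup>2 mod 4 = (if even x then 0 else 1)"
proof (cases "even x")
  case True
  then obtain k where "x = 2 * k" by blast
  then show ?thesis by (simp add: power2_eq_square)
next
  case False
  then obtain k where "x = 2 * k + 1" by (metis oddE)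
  then have "x\<^sup>2 = 4 * (k * k + k) + 1"
    by (simp add: power2_eq_square algebra_simps)
  then show ?thesis
    using False by presburger
qed

text \<open>The real and imaginary parts of \<open>\<alpha>\<^sup>2 + (1 + \<delta>i)\<beta>\<^sup>2 + \<gamma>\<^sup>2\<close> for \<open>\<alpha> = a + bi\<close>,
  \<open>\<beta> = c + di\<close>, \<open>\<gamma> = e + fi\<close>.\<close>

lemma solution_parity_middle:
  fixes a b c d e f \<delta> :: int
  assumes "odd \<delta>"
    and re: "a\<^sup>2 - b\<^sup>2 + (c\<^sup>2 - d\<^sup>2) - 2 * \<delta> * c * d + (e\<^sup>2 - f\<^sup>2) = 0"
    and im: "2 * a * b + \<delta> * (c\<^sup>2 - d\<^sup>2) + 2 * c * d + 2 * e * f = 0"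
    and "\<not> (even (a + b) \<and> even (c + d))"
  shows "even c" "even d" "odd (a + b)"
proof -
  have twice: "2 * (a * b + c * d + e * f) = - (\<delta> * (c\<^sup>2 - d\<^sup>2))"
    using im by algebra
  then have "even (\<delta> * (c\<^sup>2 - d\<^sup>2))"
    by (metis dvd_minus_iff dvd_triv_left)
  then have "even (c + d)"
    using \<open>odd \<delta>\<close> by simp
  then show "odd (a + b)"
    using assms(4) by simp
  have "even c \<and> even d"
  proof (rule ccontr)
    assume "\<not> (even c \<and> even d)"
    with \<open>even (c + d)\<close> obtain x y where c: "c = 2 * x + 1" and d: "d = 2 * y + 1"
      by (metis even_add oddE)
    have "c\<^sup>2 - d\<^sup>2 = 2 * (2 * (x * x + x - y * y - y))"
      using c d by (simp add: power2_eq_square algebra_simps)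
    then have "2 * (a * b + c * d + e * f) = 2 * (2 * (- \<delta> * (x * x + x - y * y - y)))"
      unfolding twice by algebra
    then have "a * b + c * d + e * f = 2 * (- \<delta> * (x * x + x - y * y - y))"
      by simp
    then have "even (a * b + c * d + e * f)"
      by (simp only: dvd_triv_left)
    moreover have "even (a * b)" "odd (c * d)"
      using \<open>odd (a + b)\<close> c d by auto
    ultimately have "odd (e * f)"
      by auto
    then have "odd e" "odd f"
      by auto
    then have "odd (a\<^sup>2 - b\<^sup>2 + (c\<^sup>2 - d\<^sup>2) - 2 * \<delta> * c * d + (e\<^sup>2 - f\<^sup>2))"
      using \<open>odd (a + b)\<close> c d by simp
    then show False
      using re by simp
  qed
  then show "even c" "even d" by auto
qed

lemma solution_parity_outer:
  fixes a b c d e f \<delta> :: int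
  assumes re: "a\<^sup>2 - b\<^sup>2 + (c\<^sup>2 - d\<^sup>2) - 2 * \<delta> * c * d + (e\<^sup>2 - f\<^sup>2) = 0"
    and "even c" "even d" "odd (a + b)"
  shows "(odd a \<and> even b \<and> even e \<and> odd f) \<or> (even a \<and> odd b \<and> odd e \<and> even f)"
proof -
  obtain x y where "c = 2 * x" "d = 2 * y"
    using \<open>even c\<close> \<open>even d\<close> by blast
  then have "a\<^sup>2 - b\<^sup>2 + e\<^sup>2 - f\<^sup>2 = 4 * (2 * \<delta> * x * y - x * x + y * y)"
    using re by (simp add: power2_eq_square algebra_simps)
  then have "(a\<^sup>2 - b\<^sup>2 + e\<^sup>2 - f\<^sup>2) mod 4 = 0"
    by simp
  then show ?thesis
    using \<open>odd (a + b)\<close> power2_mod_4_int[of a] power2_mod_4_int[of b]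
      power2_mod_4_int[of e] power2_mod_4_int[of f]
    by presburger
qed

lemma solution_parity:
  fixes \<delta> :: int
  assumes "odd \<delta>" "\<alpha> \<in> gint" "\<beta> \<in> gint" "\<gamma> \<in> gint"
    and eq: "\<alpha>\<^sup>2 + (1 + of_int \<delta> * \<i>) * \<beta>\<^sup>2 + \<gamma>\<^sup>2 = 0"
    and "\<not> (gdvd (1 + \<i>) \<alpha> \<and> gdvd (1 + \<i>) \<beta>)"
  shows "gdvd 2 \<beta>" "\<alpha> \<in> gO_re \<and> \<gamma> \<in> gO_im \<or> \<alpha> \<in> gO_im \<and> \<gamma> \<in> gO_re"
proof -
  obtain a b where \<alpha>: "\<alpha> = Complex (of_int a) (of_int b)"
    using assms(2) by (rule gint_cases)
  obtain c d where \<beta>: "\<beta> = Complex (of_int c) (of_int d)"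
    using assms(3) by (rule gint_cases)
  obtain e f where \<gamma>: "\<gamma> = Complex (of_int e) (of_int f)"
    using assms(4) by (rule gint_cases)
  have "\<alpha>\<^sup>2 + (1 + of_int \<delta> * \<i>) * \<beta>\<^sup>2 + \<gamma>\<^sup>2 =
      Complex (of_int (a\<^sup>2 - b\<^sup>2 + (c\<^sup>2 - d\<^sup>2) - 2 * \<delta> * c * d + (e\<^sup>2 - f\<^sup>2)))
              (of_int (2 * a * b + \<delta> * (c\<^sup>2 - d\<^sup>2) + 2 * c * d + 2 * e * f))"
    unfolding \<alpha> \<beta> \<gamma> by (simp add: complex_eq_iff power2_eq_square algebra_simps)
  then have "Complex (of_int (a\<^sup>2 - b\<^sup>2 + (c\<^sup>2 - d\<^sup>2) - 2 * \<delta> * c * d + (e\<^sup>2 - f\<^sup>2)))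
              (of_int (2 * a * b + \<delta> * (c\<^sup>2 - d\<^sup>2) + 2 * c * d + 2 * e * f)) = 0"
    using eq by simp
  then have re: "a\<^sup>2 - b\<^sup>2 + (c\<^sup>2 - d\<^sup>2) - 2 * \<delta> * c * d + (e\<^sup>2 - f\<^sup>2) = 0"
    and im: "2 * a * b + \<delta> * (c\<^sup>2 - d\<^sup>2) + 2 * c * d + 2 * e * f = 0"
    by (simp_all only: Complex_eq_0 of_int_eq_0_iff)
  have "\<not> (even (a + b) \<and> even (c + d))"
    using assms(6) \<alpha> \<beta> by (simp add: gdvd_one_plus_i_Complex)
  note middle = solution_parity_middle[OF \<open>odd \<delta>\<close> re im this]
  have "\<beta> = 2 * Complex (of_int (c div 2)) (of_int (d div 2))"
    using middle(1,2) \<beta> by (simp add: complex_eq_iff) (metis dvd_mult_div_cancel of_int_mult of_int_numeral)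
  then show "gdvd 2 \<beta>"
    unfolding gdvd_def using gint_Complex by blast
  show "\<alpha> \<in> gO_re \<and> \<gamma> \<in> gO_im \<or> \<alpha> \<in> gO_im \<and> \<gamma> \<in> gO_re"
    using solution_parity_outer[OF re middle] \<alpha> \<gamma> by auto
qed

lemma gcoprime_solution_swap:
  assumes "\<alpha> \<in> gint" "\<beta> \<in> gint" "\<gamma> \<in> gint" "k \<in> gint" "\<beta> \<noteq> 0"
    and eq: "\<alpha>\<^sup>2 + k * \<beta>\<^sup>2 + \<gamma>\<^sup>2 = 0" and "gcoprime \<alpha> \<beta>"
  shows "gcoprime \<gamma> \<beta>"
  unfolding gcoprime_def
proof (intro ballI impI)
  fix d
  assume d: "d \<in> gint" "gdvd d \<gamma> \<and> gdvd d \<beta>"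
  show "d \<in> gunits"
  proof (rule ccontr)
    assume "d \<notin> gunits"
    moreover have "d \<noteq> 0"
      using d(2) assms(5) unfolding gdvd_def by auto
    ultimately obtain p where p: "gprime p" "gdvd p d"
      using gprime_divisor_exists d(1) by blast
    have p_dvd: "gdvd p \<gamma>" "gdvd p \<beta>"
      using p(2) d(2) gdvd_trans by blast+
    have "gdvd p ((- \<gamma>) * \<gamma> - (k * \<beta>) * \<beta>)"
      using assms by (intro gdvd_diff gdvd_mult p_dvd) auto
    moreover have "(- \<gamma>) * \<gamma> - (k * \<beta>) * \<beta> = \<alpha> * \<alpha>"
      using eq unfolding power2_eq_square by algebra
    ultimately have "gdvd p \<alpha>"
      using p(1) assms(1) unfolding gprime_def by auto
    then have "p \<in> gunits"
      using \<open>gcoprime \<alpha> \<beta>\<close> p_dvd(2) gprime_gint[OF p(1)] unfolding gcoprime_def by blast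
    then show False
      using p(1) unfolding gprime_def by blast
  qed
qed

lemma primary_solution:
  assumes "v \<in> gunits" "v * x \<in> gO_re" "v * z \<in> gO_im"
    and eq: "x\<^sup>2 + k * y\<^sup>2 + z\<^sup>2 = 0" and "gcoprime x y" "x * y * z \<noteq> 0"
  obtains u1 u3 where "u1 \<in> gunits" "u3 \<in> gunits" "u1 * x \<in> gOI" "u3 * z \<in> gOI"
    "(u1 * x)\<^sup>2 + k * (v * y)\<^sup>2 = (u3 * z)\<^sup>2" "gcoprime (u1 * x) (v * y)"
    "u1 * x * (v * y) * (u3 * z) \<noteq> 0"
proof -
  obtain s where s: "s \<in> {1, -1}" "s * (v * x) \<in> gOI"
    using assms(2) by (rule gO_re_sign_gOI)
  obtain s' where s': "s' \<in> {1, -1}" "s' * (\<i> * (v * z)) \<in> gOI"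
    using assms(3) i_mult_gO_re_iff gO_im_gint by (blast elim: gO_re_sign_gOI)
  have "s\<^sup>2 = 1" "s'\<^sup>2 = 1"
    using s(1) s'(1) by auto
  then have "(s * v * x)\<^sup>2 + k * (v * y)\<^sup>2 - (s' * \<i> * v * z)\<^sup>2 = v\<^sup>2 * (x\<^sup>2 + k * y\<^sup>2 + z\<^sup>2)"
    by (simp add: power_mult_distrib algebra_simps)
  then have "(s * v * x)\<^sup>2 + k * (v * y)\<^sup>2 = (s' * \<i> * v * z)\<^sup>2"
    using eq by simp
  moreover have "s * v \<in> gunits" "s' * \<i> * v \<in> gunits"
    using s(1) s'(1) assms(1) by (auto simp: gunits_def)
  moreover have "gcoprime (s * v * x) (v * y)"
    using gcoprime_mult_units[OF \<open>gcoprime x y\<close> \<open>s * v \<in> gunits\<close> assms(1)] by (simp add: mult.assoc)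
  moreover have "s * v * x * (v * y) * (s' * \<i> * v * z) \<noteq> 0"
    using \<open>x * y * z \<noteq> 0\<close> s(1) s'(1) assms(1) gunits_nonzero by auto
  ultimately show ?thesis
    using that[of "s * v" "s' * \<i> * v"] s(2) s'(2) by (simp add: mult.assoc)
qed

lemma solution_normal_form:
  fixes \<delta> :: int
  assumes "odd \<delta>" "\<alpha> \<in> gint" "\<beta> \<in> gint" "\<gamma> \<in> gint"
    and eq: "\<alpha>\<^sup>2 + (1 + of_int \<delta> * \<i>) * \<beta>\<^sup>2 + \<gamma>\<^sup>2 = 0"
    and nonzero: "\<alpha> * \<beta> * \<gamma> \<noteq> 0" and coprime: "gcoprime \<alpha> \<beta>"
  shows "\<exists>u1\<in>gunits. \<exists>u2\<in>gunits. \<exists>u3\<in>gunits. \<exists>swap::bool. \<exists>X Y Z.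
         (if swap then X = u1 * \<gamma> \<and> Y = u2 * \<beta> \<and> Z = u3 * \<alpha>
                  else X = u1 * \<alpha> \<and> Y = u2 * \<beta> \<and> Z = u3 * \<gamma>) \<and>
         X\<^sup>2 + (1 + of_int \<delta> * \<i>) * Y\<^sup>2 = Z\<^sup>2 \<and>
         X \<in> gOI \<and> Z \<in> gOI \<and>
         (\<exists>(a1::nat) (P::complex set) (e::complex \<Rightarrow> nat).
            finite P \<and> P \<subseteq> {p. gprime p \<and> p \<in> gOI} \<and>
            Y = (1 + \<i>) ^ (2 + a1) * (\<Prod>p\<in>P. p ^ e p)) \<and>
         gcoprime X Y \<and> X * Y * Z \<noteq> 0"
proof -
  define k where "k = 1 + of_int \<delta> * \<i>"
  have "\<not> (gdvd (1 + \<i>) \<alpha> \<and> gdvd (1 + \<i>) \<beta>)"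
    using coprime one_plus_i_not_gunit unfolding gcoprime_def by auto
  note parity = solution_parity[OF assms(1-5) this]
  have "\<beta> \<noteq> 0"
    using nonzero by auto
  then obtain v a1 w where v: "v \<in> gunits" "w \<in> gOI" "v * \<beta> = (1 + \<i>) ^ (2 + a1) * w"
    by (rule even_gint_normal_form[OF assms(3) _ parity(1)])
  obtain P e where P: "finite P" "P \<subseteq> {p. gprime p \<and> p \<in> gOI}" "w = (\<Prod>p\<in>P. p ^ e p)"
    using gOI_prime_factorization[OF v(2)] .
  have "v * \<alpha> \<in> gO_re \<and> v * \<gamma> \<in> gO_im \<or> v * \<alpha> \<in> gO_im \<and> v * \<gamma> \<in> gO_re"
    \<comment> \<open>multiplication by \<open>\<plusminus>1\<close> keeps both classes, by \<open>\<plusminus>i\<close> swaps both\<close>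
    using v(1) parity(2) assms(2,4) i_mult_gO_im_iff i_mult_gO_re_iff minus_gO_re_iff minus_gO_im_iff
    unfolding gunits_def by (auto simp: minus_mult_left[symmetric] simp del: minus_mult_left)
  then obtain swap x z where xz: "(if swap then (\<gamma>, \<alpha>) else (\<alpha>, \<gamma>)) = (x, z)"
    and classes: "v * x \<in> gO_re" "v * z \<in> gO_im"
    by (metis (full_types))
  have "gcoprime \<gamma> \<beta>"
    using gcoprime_solution_swap[OF assms(2-4), of k] eq coprime nonzero by (auto simp: k_def)
  then have "x\<^sup>2 + k * \<beta>\<^sup>2 + z\<^sup>2 = 0" "gcoprime x \<beta>" "x * \<beta> * z \<noteq> 0"
    using xz eq coprime nonzero by (auto simp: k_def algebra_simps split: if_splits)
  then obtain u1 u3 where u: "u1 \<in> gunits" "u3 \<in> gunits" "u1 * x \<in> gOI" "u3 * z \<in> gOI"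
    "(u1 * x)\<^sup>2 + k * (v * \<beta>)\<^sup>2 = (u3 * z)\<^sup>2" "gcoprime (u1 * x) (v * \<beta>)"
    "u1 * x * (v * \<beta>) * (u3 * z) \<noteq> 0"
    by (rule primary_solution[OF v(1) classes])
  have "if swap then u1 * x = u1 * \<gamma> \<and> v * \<beta> = v * \<beta> \<and> u3 * z = u3 * \<alpha>
        else u1 * x = u1 * \<alpha> \<and> v * \<beta> = v * \<beta> \<and> u3 * z = u3 * \<gamma>"
    using xz by auto
  moreover have "\<exists>(a1::nat) (P::complex set) (e::complex \<Rightarrow> nat).
      finite P \<and> P \<subseteq> {p. gprime p \<and> p \<in> gOI} \<and> v * \<beta> = (1 + \<i>) ^ (2 + a1) * (\<Prod>p\<in>P. p ^ e p)"
    using P v(3) by blast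
  ultimately show ?thesis
    using u v(1) unfolding k_def by blast
qed

theorem theorem4p14:
  fixes \<delta> :: int
  assumes "\<delta> \<in> {1, -1}"
  shows
  "(\<forall>\<alpha>\<in>gint. \<forall>\<beta>\<in>gint. \<forall>\<gamma>\<in>gint.
      \<alpha>\<^sup>2 + (1 + of_int \<delta> * \<i>) * \<beta>\<^sup>2 + \<gamma>\<^sup>2 = 0 \<and> \<alpha> * \<beta> * \<gamma> \<noteq> 0 \<and> gcoprime \<alpha> \<beta> \<longrightarrow>
      (\<exists>u1\<in>gunits. \<exists>u2\<in>gunits. \<exists>u3\<in>gunits. \<exists>swap::bool. \<exists>X Y Z.
         (if swap then X = u1 * \<gamma> \<and> Y = u2 * \<beta> \<and> Z = u3 * \<alpha>
                  else X = u1 * \<alpha> \<and> Y = u2 * \<beta> \<and> Z = u3 * \<gamma>) \<and>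
         X\<^sup>2 + (1 + of_int \<delta> * \<i>) * Y\<^sup>2 = Z\<^sup>2 \<and>
         X \<in> gOI \<and> Z \<in> gOI \<and>
         (\<exists>(a1::nat) (P::complex set) (e::complex \<Rightarrow> nat).
            finite P \<and> P \<subseteq> {p. gprime p \<and> p \<in> gOI} \<and>
            Y = (1 + \<i>) ^ (2 + a1) * (\<Prod>p\<in>P. p ^ e p)) \<and>
         gcoprime X Y \<and> X * Y * Z \<noteq> 0))
   \<and>
   (\<forall>X\<in>gint. \<forall>Y\<in>gint. \<forall>Z\<in>gint.
      X\<^sup>2 + (1 + of_int \<delta> * \<i>) * Y\<^sup>2 = Z\<^sup>2 \<and> gcoprime X Y \<and> X * Y * Z \<noteq> 0 \<longrightarrow>
      X\<^sup>2 + (1 + of_int \<delta> * \<i>) * Y\<^sup>2 + (\<i> * Z)\<^sup>2 = 0 \<and> gcoprime X Y \<and> X * Y * (\<i> * Z) \<noteq> 0)"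
proof -
  from assms have "odd \<delta>"
    by auto
  then show ?thesis
    by (intro conjI ballI impI; elim conjE)
      (assumption | rule solution_normal_form[OF \<open>odd \<delta>\<close>] | simp add: power_mult_distrib)+
qed

end
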